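(* Let $G$ be a compact group with Haar probability measure $\lambda$ and let $y\in G$. Let $\nu_y=s_y[\lambda]$ be the image of $\lambda$ under $s_y\colon G\to G\times G$, $s_y(x)=(x,x\oplus y)$. Then for every Borel rectangle $A\times B\subseteq G\times G$, $$\nu_y(A\times B)=\lim_{\mathcal E\in\mathcal B}\nu_{y,\mathcal E}(A\times B),$$ and consequently the net $\{\nu_{y,\mathcal E}\}_{\mathcal E\in\mathcal B}$ converges to $\nu_y$ in the weak$^\ast$ topology of $P(G\times G)$.
   Context: $G=(G,\oplus)$ is a compact Hausdorff group with Haar probability measure $\lambda$; $E\oplus y=\{e\oplus y:e\in E\}$. $\mathcal B$ is the set of all finite partitions of $G$ into Borel sets, directed by refinement ($\mathcal E_1\prec\mathcal E_2$ if $\mathcal E_2$ is finer than $\mathcal E_1$). For $\mathcal E\in\mathcal B$, $\mathcal E^\ast$ is the set of $E\in\mathcal E$ with $\lambda(E)>0$. $\lambda_2$ is the regular Borel extension of $\lambda\otimes\lambda$ on $G\times G$, and $\nu_{y,\mathcal E}(D)=\sum_{E\in\mathcal E^\ast}\lambda_2\big(D\cap(E\times(E\oplus y))\big)/\lambda(E)$ for Borel $D\subseteq G\times G$. $P(X)$ is the space of regular Borel probability measures on $X$ with the weak$^\ast$ topology (as a subset of $\mathcal C(X)^\ast$). The image measure is $g[\mu](A)=\mu(g^{-1}[A])$. *)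

theory Defs
  imports "HOL-Probability.Probability"
begin

text \<open>A compact Hausdorff group is modelled as a type of class topological_group_add
  (a possibly non-commutative group with continuous operations), t2_space, with UNIV compact.
  The group operation x \<oplus> y is written x + y.\<close>

definition regular_measure :: "'b::topological_space measure \<Rightarrow> bool" where
  "regular_measure M \<longleftrightarrow>
     (\<forall>A\<in>sets borel.
        emeasure M A = (INF U\<in>{U. open U \<and> A \<subseteq> U}. emeasure M U) \<and>
        emeasure M A = (SUP K\<in>{K. compact K \<and> K \<subseteq> A}. emeasure M K))"

definition haar_prob :: "'a::topological_group_add measure \<Rightarrow> bool" where
  "haar_prob M \<longleftrightarrow> sets M = sets borel \<and> prob_space M \<and> regular_measure M \<and>
     (\<forall>A\<in>sets borel. \<forall>x. emeasure M ((\<lambda>a. x + a) ` A) = emeasure M A)"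

definition rtrans :: "'a::plus set \<Rightarrow> 'a \<Rightarrow> 'a set" where
  "rtrans E y = (\<lambda>e. e + y) ` E"

definition borel_partitions :: "'a::topological_space set set set" where
  "borel_partitions = {P. finite P \<and> P \<subseteq> sets borel \<and> {} \<notin> P \<and> \<Union>P = UNIV \<and>
      (\<forall>E\<in>P. \<forall>F\<in>P. E \<noteq> F \<longrightarrow> E \<inter> F = {})}"

definition refines :: "'a set set \<Rightarrow> 'a set set \<Rightarrow> bool" where
  "refines Q P \<longleftrightarrow> (\<forall>F\<in>Q. \<exists>E\<in>P. F \<subseteq> E)"

text \<open>The filter of the net indexed by the directed set of partitions (tails of the net).\<close>
definition partition_net :: "'a::topological_space set set filter" where
  "partition_net = (INF P\<in>borel_partitions. principal {Q\<in>borel_partitions. refines Q P})"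

definition regular_product_extension :: "'a::topological_space measure \<Rightarrow> ('a \<times> 'a) measure \<Rightarrow> bool" where
  "regular_product_extension M L2 \<longleftrightarrow> sets L2 = sets borel \<and> finite_measure L2 \<and> regular_measure L2 \<and>
     (\<forall>A\<in>sets borel. \<forall>B\<in>sets borel. emeasure L2 (A \<times> B) = emeasure M A * emeasure M B)"

definition nu_part :: "'a::{topological_space,plus} measure \<Rightarrow> ('a \<times> 'a) measure \<Rightarrow> 'a \<Rightarrow> 'a set set \<Rightarrow> ('a \<times> 'a) measure" where
  "nu_part M L2 y P = measure_of UNIV (sets borel)
     (\<lambda>D. \<Sum>E\<in>{E\<in>P. emeasure M E > 0}. emeasure L2 (D \<inter> (E \<times> rtrans E y)) / emeasure M E)"

definition nu_diag :: "'a::{topological_space,plus} measure \<Rightarrow> 'a \<Rightarrow> ('a \<times> 'a) measure" where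
  "nu_diag M y = distr M borel (\<lambda>x. (x, x + y))"

end

theory Submission
  imports Defs
begin

text \<open>For a Borel rectangle \<open>A \<times> B\<close> the defining sum of \<open>\<nu>\<^sub>y\<^sub>,\<^sub>\<E>(A \<times> B)\<close> has the terms
  \<open>\<lambda>(A \<inter> E) \<lambda>(B \<inter> (E \<oplus> y)) / \<lambda>(E)\<close>. As soon as \<open>\<E>\<close> refines the partition generated by \<open>A\<close>
  and \<open>B \<ominus> y\<close>, each block \<open>E\<close> either lies in \<open>A \<inter> (B \<ominus> y)\<close>, and then contributes
  \<open>\<lambda>(E) \<lambda>(E \<oplus> y) / \<lambda>(E) = \<lambda>(E)\<close> by right invariance of \<open>\<lambda>\<close>, or contributes nothing. So the net
  is eventually constant, equal to \<open>\<lambda>(A \<inter> (B \<ominus> y)) = \<nu>\<^sub>y(A \<times> B)\<close>.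
  Right invariance is not part of the definition of a Haar measure: it follows from invariance
  under inversion, which is obtained by Fubini's theorem for continuous functions and extended
  to Borel sets by Urysohn's lemma and regularity.
  Weak\<open>\<^sup>*\<close> convergence then follows because a continuous function on the compact space
  \<open>G \<times> G\<close> is a uniform limit of step functions on rectangles \<open>E \<times> F\<close> built from a single finite
  Borel partition.\<close>

lemma compact_Hausdorff_Urysohn:
  fixes K U :: "'a::t2_space set"
  assumes "compact (UNIV :: 'a set)" "compact K" "open U" "K \<subseteq> U"
  obtains f :: "'a \<Rightarrow> real" where "continuous_on UNIV f" "\<And>x. 0 \<le> f x" "\<And>x. f x \<le> 1"
    "\<And>x. x \<in> K \<Longrightarrow> f x = 1" "\<And>x. x \<notin> U \<Longrightarrow> f x = 0"
proof -
  have "compact_space (euclidean :: 'a topology)"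
    using assms(1) by (simp add: compact_space_def)
  moreover have "Hausdorff_space (euclidean :: 'a topology)"
    by (metis Hausdorff_space_def disjnt_def hausdorff open_openin)
  ultimately have "normal_space (euclidean :: 'a topology)"
    by (blast intro: compact_Hausdorff_or_regular_imp_normal_space)
  then obtain f where f: "continuous_map euclidean (top_of_set {0..1::real}) f"
    "f ` (- U) \<subseteq> {0}" "f ` K \<subseteq> {1}"
    by (rule Urysohn_lemma[of _ "- U" K 0 1])
       (use assms compact_imp_closed[OF assms(2)] in \<open>auto simp: closed_def disjnt_def\<close>)
  have "continuous_on UNIV f"
    using f(1) by (metis continuous_map_in_subtopology continuous_map_iff_continuous subtopology_UNIV)
  moreover have "\<And>x. f x \<in> {0..1}"
    using f(1) by (auto simp: continuous_map_def)
  ultimately show ?thesis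
    using f by (intro that) (force simp: image_subset_iff)+
qed

lemma borel_measurable_continuous_on_UNIV:
  "continuous_on UNIV f \<Longrightarrow> sets M = sets borel \<Longrightarrow> f \<in> borel_measurable M"
  using borel_measurable_continuous_onI measurable_cong_sets by blast

lemma integrable_continuous_compact_UNIV:
  fixes f :: "'b::topological_space \<Rightarrow> real"
  assumes "finite_measure M" "compact (UNIV :: 'b set)" "continuous_on UNIV f"
    and "f \<in> borel_measurable M"
  shows "integrable M f"
proof -
  have "bounded (range f)"
    using assms(2,3) by (intro compact_imp_bounded compact_continuous_image)
  then obtain B where "\<And>x. norm (f x) \<le> B"
    by (auto simp: bounded_iff)
  then show ?thesis
    using assms(1,4) by (intro finite_measure.integrable_const_bound[of _ _ B]) auto
qed

lemma (in prob_space) abs_integral_diff_le: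
  fixes f g :: "'a \<Rightarrow> real"
  assumes "integrable M f" "integrable M g" "\<And>x. \<bar>f x - g x\<bar> \<le> e"
  shows "\<bar>integral\<^sup>L M f - integral\<^sup>L M g\<bar> \<le> e"
proof -
  have "\<bar>integral\<^sup>L M f - integral\<^sup>L M g\<bar> = \<bar>\<integral>x. f x - g x \<partial>M\<bar>"
    using assms by simp
  also have "\<dots> \<le> (\<integral>x. \<bar>f x - g x\<bar> \<partial>M)"
    using integral_norm_bound[of M "\<lambda>x. f x - g x"] by simp
  also have "\<dots> \<le> e"
    using assms by (intro integral_le_const) auto
  finally show ?thesis .
qed

lemma image_add_left_eq_vimage: "(\<lambda>a. c + a) ` A = (\<lambda>x. - c + x) -` (A :: 'a::group_add set)"
  by (force simp: add.assoc[symmetric])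

lemma image_add_right_eq_vimage: "(\<lambda>a. a + c) ` A = (\<lambda>x. x + - c) -` (A :: 'a::group_add set)"
  by (force simp: add.assoc)

lemma image_uminus_eq_vimage: "uminus ` A = uminus -` (A :: 'a::group_add set)"
  by (force simp: image_iff)

lemma rtrans_uminus: "rtrans B (- y) = {x. x + y \<in> (B :: 'a::group_add set)}"
  unfolding rtrans_def image_add_right_eq_vimage by (simp add: vimage_def)

lemma Int_rtrans: "B \<inter> rtrans E y = rtrans (E \<inter> rtrans B (- y)) (y :: 'a::group_add)"
  unfolding rtrans_uminus by (auto simp: rtrans_def)

lemma sets_borel_image_add_left:
  "A \<in> sets borel \<Longrightarrow> (\<lambda>a. c + a) ` A \<in> sets (borel :: 'a::topological_group_add measure)"
  unfolding image_add_left_eq_vimage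
  by (intro measurable_sets_borel[of _ borel] borel_measurable_continuous_onI continuous_intros)

lemma sets_borel_rtrans:
  "E \<in> sets borel \<Longrightarrow> rtrans E y \<in> sets (borel :: 'a::topological_group_add measure)"
  unfolding rtrans_def image_add_right_eq_vimage
  by (intro measurable_sets_borel[of _ borel] borel_measurable_continuous_onI continuous_intros)

lemma sets_borel_image_uminus:
  "A \<in> sets borel \<Longrightarrow> uminus ` A \<in> sets (borel :: 'a::topological_group_add measure)"
  unfolding image_uminus_eq_vimage
  by (intro measurable_sets_borel[of _ borel] borel_measurable_continuous_onI continuous_intros)

section \<open>Finite Borel partitions\<close>

lemma borel_partitionsD:
  assumes "P \<in> borel_partitions"
  shows "finite P" "P \<subseteq> sets borel" "\<exists>E\<in>P. x \<in> E"
    "E \<in> P \<Longrightarrow> F \<in> P \<Longrightarrow> x \<in> E \<Longrightarrow> x \<in> F \<Longrightarrow> E = F"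
  using assms unfolding borel_partitions_def by (simp, simp, blast, blast)

lemma eventually_partition_net_refines:
  "P \<in> borel_partitions \<Longrightarrow> eventually (\<lambda>Q. Q \<in> borel_partitions \<and> refines Q P) partition_net"
  unfolding partition_net_def by (rule eventually_INF1) (auto simp: eventually_principal)

lemma sum_emeasure_borel_partition:
  assumes P: "P \<in> borel_partitions" and M: "sets M = sets borel" and A: "A \<in> sets M"
  shows "(\<Sum>E\<in>P. emeasure M (E \<inter> A)) = emeasure M A"
proof -
  have "disjoint_family_on (\<lambda>E. E \<inter> A) P"
    using P unfolding borel_partitions_def disjoint_family_on_def by blast
  then have "(\<Sum>E\<in>P. emeasure M (E \<inter> A)) = emeasure M (\<Union>E\<in>P. E \<inter> A)"
    using borel_partitionsD(1,2)[OF P] A M by (intro sum_emeasure) auto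
  also have "(\<Union>E\<in>P. E \<inter> A) = A"
    using borel_partitionsD(3)[OF P] by blast
  finally show ?thesis .
qed

definition atoms :: "'a set set \<Rightarrow> 'a set set" where
  "atoms S = range (\<lambda>x. {z. \<forall>V\<in>S. z \<in> V \<longleftrightarrow> x \<in> V})"

lemma atoms_subset_or_disjoint: "E \<in> atoms S \<Longrightarrow> V \<in> S \<Longrightarrow> E \<subseteq> V \<or> E \<inter> V = {}"
  by (auto simp: atoms_def)

lemma refines_atoms_subset_or_disjoint:
  "refines Q (atoms S) \<Longrightarrow> V \<in> S \<Longrightarrow> F \<in> Q \<Longrightarrow> F \<subseteq> V \<or> F \<inter> V = {}"
  unfolding refines_def by (blast dest: atoms_subset_or_disjoint)

lemma atoms_in_borel_partitions:
  assumes "finite S" "S \<subseteq> sets borel"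
  shows "atoms S \<in> borel_partitions"
proof -
  define atom where "atom x = {z. \<forall>V\<in>S. z \<in> V \<longleftrightarrow> x \<in> V}" for x
  have "atoms S \<subseteq> (\<lambda>T. {z. \<forall>V\<in>S. z \<in> V \<longleftrightarrow> V \<in> T}) ` Pow S"
    unfolding atoms_def by (auto intro!: image_eqI[of _ _ "{V\<in>S. x \<in> V}" for x])
  then have "finite (atoms S)"
    using assms(1) by (meson finite_Pow_iff finite_imageI finite_subset)
  moreover have "atom x \<in> sets borel" for x
  proof (cases "S = {}")
    case False
    have "atom x = (\<Inter>V\<in>S. if x \<in> V then V else UNIV - V)"
      by (auto simp: atom_def split: if_splits)
    also have "\<dots> \<in> sets borel"
      using assms False by (intro sets.finite_INT) auto
    finally show ?thesis .
  qed (simp add: atom_def)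
  moreover have "atom z = atom x" if "z \<in> atom x" for x z
    using that by (auto simp: atom_def)
  moreover have "x \<in> atom x" for x
    by (simp add: atom_def)
  ultimately show ?thesis
    unfolding borel_partitions_def atoms_def atom_def[symmetric] by blast
qed

section \<open>Step functions on rectangles\<close>

lemma partition_small_oscillation:
  fixes f :: "'a::topological_space \<times> 'a \<Rightarrow> real"
  assumes cpt: "compact (UNIV :: 'a set)" and f: "continuous_on UNIV f" and e: "0 < e"
  obtains P where "P \<in> borel_partitions"
    "\<And>A B p q. A \<in> P \<Longrightarrow> B \<in> P \<Longrightarrow> p \<in> A \<times> B \<Longrightarrow> q \<in> A \<times> B \<Longrightarrow> \<bar>f p - f q\<bar> < e"
proof -
  define Ob where "Ob p = f -` ball (f p) (e / 2)" for p
  have "\<forall>p. \<exists>V W. open V \<and> open W \<and> p \<in> V \<times> W \<and> V \<times> W \<subseteq> Ob p"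
  proof
    fix p
    have "open (Ob p)" "p \<in> Ob p"
      using f e by (auto simp: Ob_def intro: open_vimage)
    then show "\<exists>V W. open V \<and> open W \<and> p \<in> V \<times> W \<and> V \<times> W \<subseteq> Ob p"
      by (metis open_prod_elim)
  qed
  then obtain V W where V: "\<And>p. open (V p)" and W: "\<And>p. open (W p)"
    and mem: "\<And>p. p \<in> V p \<times> W p" and sub: "\<And>p. V p \<times> W p \<subseteq> Ob p"
    by metis
  have "compact (UNIV :: ('a \<times> 'a) set)"
    using compact_Times[OF cpt cpt] by simp
  then obtain T where T: "finite T" "UNIV \<subseteq> (\<Union>p\<in>T. V p \<times> W p)"
    by (rule compactE_image[of _ UNIV "\<lambda>p. V p \<times> W p"]) (use V W mem in \<open>auto simp: open_Times\<close>)
  define S where "S = V ` T \<union> W ` T"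
  have "finite S" "S \<subseteq> sets borel"
    using T(1) V W by (auto simp: S_def)
  then have "atoms S \<in> borel_partitions"
    by (rule atoms_in_borel_partitions)
  then show ?thesis
  proof (rule that)
    fix A B p q assume A: "A \<in> atoms S" and B: "B \<in> atoms S" and p: "p \<in> A \<times> B" and q: "q \<in> A \<times> B"
    from subsetD[OF T(2) UNIV_I, of p] obtain t where t: "t \<in> T" "p \<in> V t \<times> W t"
      by (rule UN_E)
    then have "V t \<in> S" "W t \<in> S" "A \<inter> V t \<noteq> {}" "B \<inter> W t \<noteq> {}"
      using p by (auto simp: S_def mem_Times_iff)
    then have "A \<subseteq> V t" "B \<subseteq> W t"
      using atoms_subset_or_disjoint[OF A] atoms_subset_or_disjoint[OF B] by blast+
    then have "p \<in> Ob t" "q \<in> Ob t"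
      using sub[of t] p q by blast+
    then have "dist (f p) (f t) < e / 2" "dist (f q) (f t) < e / 2"
      by (auto simp: Ob_def dist_commute)
    then show "\<bar>f p - f q\<bar> < e"
      using dist_triangle_half_l by (fastforce simp: dist_real_def)
  qed
qed

definition grid_step :: "('a \<times> 'a \<Rightarrow> real) \<Rightarrow> 'a set set \<Rightarrow> 'a \<times> 'a \<Rightarrow> real" where
  "grid_step f P q = (\<Sum>(A, B)\<in>P \<times> P. f (SOME p. p \<in> A \<times> B) * indicator (A \<times> B) q)"

lemma grid_step_eq:
  assumes P: "P \<in> borel_partitions" and "A \<in> P" "B \<in> P" "q \<in> A \<times> B"
  shows "grid_step f P q = f (SOME p. p \<in> A \<times> B)"
proof -
  have "grid_step f P q = (\<Sum>AB\<in>P \<times> P. if AB = (A, B) then f (SOME p. p \<in> A \<times> B) else 0)"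
    unfolding grid_step_def
  proof (rule sum.cong[OF refl], clarify)
    fix A' B' assume "A' \<in> P" "B' \<in> P"
    then have "q \<in> A' \<times> B' \<longleftrightarrow> (A', B') = (A, B)"
      using assms(2-4) borel_partitionsD(4)[OF P, of A' A "fst q"] borel_partitionsD(4)[OF P, of B' B "snd q"]
      by (auto simp: mem_Times_iff)
    then show "f (SOME p. p \<in> A' \<times> B') * indicator (A' \<times> B') q =
        (if (A', B') = (A, B) then f (SOME p. p \<in> A \<times> B) else 0)"
      by (auto simp: indicator_def)
  qed
  also have "\<dots> = f (SOME p. p \<in> A \<times> B)"
    using assms borel_partitionsD(1)[OF P] by simp
  finally show ?thesis .
qed

lemma grid_step_approx:
  fixes f :: "'a::topological_space \<times> 'a \<Rightarrow> real"
  assumes "compact (UNIV :: 'a set)" "continuous_on UNIV f" "0 < e"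
  obtains P where "P \<in> borel_partitions" "\<And>q. \<bar>f q - grid_step f P q\<bar> < e"
proof -
  obtain P where P: "P \<in> borel_partitions"
    and osc: "\<And>A B p q. A \<in> P \<Longrightarrow> B \<in> P \<Longrightarrow> p \<in> A \<times> B \<Longrightarrow> q \<in> A \<times> B \<Longrightarrow> \<bar>f p - f q\<bar> < e"
    by (rule partition_small_oscillation[OF assms]) (rule that)
  have "\<bar>f q - grid_step f P q\<bar> < e" for q
  proof -
    obtain A B where "A \<in> P" "fst q \<in> A" "B \<in> P" "snd q \<in> B"
      using borel_partitionsD(3)[OF P, of "fst q"] borel_partitionsD(3)[OF P, of "snd q"] by blast
    then have AB: "A \<in> P" "B \<in> P" "q \<in> A \<times> B"
      by (simp_all add: mem_Times_iff)
    have "(SOME p. p \<in> A \<times> B) \<in> A \<times> B"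
      using AB(3) by (rule someI)
    then show ?thesis
      using grid_step_eq[OF P AB] osc[OF AB] by simp
  qed
  with P show ?thesis
    by (rule that)
qed

lemma borel_measurable_grid_step:
  "(\<And>A B. A \<in> P \<Longrightarrow> B \<in> P \<Longrightarrow> A \<times> B \<in> sets M) \<Longrightarrow> grid_step f P \<in> borel_measurable M"
  unfolding grid_step_def[abs_def] by (auto intro!: borel_measurable_sum)

lemma integral_grid_step:
  assumes M: "finite_measure M" and rect: "\<And>A B. A \<in> P \<Longrightarrow> B \<in> P \<Longrightarrow> A \<times> B \<in> sets M"
  shows "integrable M (grid_step f P)"
    and "integral\<^sup>L M (grid_step f P) = (\<Sum>(A, B)\<in>P \<times> P. f (SOME p. p \<in> A \<times> B) * measure M (A \<times> B))"
proof -
  have int: "integrable M (indicator (A \<times> B) :: _ \<Rightarrow> real)" if "A \<in> P" "B \<in> P" for A B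
    using rect[OF that] finite_measure.emeasure_finite[OF M]
    by (intro integrable_real_indicator) (auto simp: top.not_eq_extremum)
  then show "integrable M (grid_step f P)"
    unfolding grid_step_def[abs_def] by (auto intro!: Bochner_Integration.integrable_sum)
  have "integral\<^sup>L M (grid_step f P) =
      (\<Sum>(A, B)\<in>P \<times> P. \<integral>q. f (SOME p. p \<in> A \<times> B) * indicator (A \<times> B) q \<partial>M)"
    unfolding grid_step_def[abs_def] using int
    by (subst Bochner_Integration.integral_sum) (auto simp: split_beta)
  also have "\<dots> = (\<Sum>(A, B)\<in>P \<times> P. f (SOME p. p \<in> A \<times> B) * measure M (A \<times> B))"
    using rect finite_measure.emeasure_finite[OF M]
    by (intro sum.cong) (auto simp: top.not_eq_extremum)
  finally show "integral\<^sup>L M (grid_step f P) = (\<Sum>(A, B)\<in>P \<times> P. f (SOME p. p \<in> A \<times> B) * measure M (A \<times> B))" .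
qed

text \<open>The product of the Borel \<open>\<sigma>\<close>-algebras can be strictly smaller than the Borel \<open>\<sigma>\<close>-algebra
  of \<open>G \<times> G\<close> when \<open>G\<close> is not second countable, so continuity alone does not give measurability.\<close>

lemma borel_measurable_continuous_rectangles:
  fixes f :: "'a::topological_space \<times> 'a \<Rightarrow> real"
  assumes cpt: "compact (UNIV :: 'a set)" and f: "continuous_on UNIV f"
    and rect: "\<And>A B. A \<in> sets borel \<Longrightarrow> B \<in> sets borel \<Longrightarrow> A \<times> B \<in> sets M"
  shows "f \<in> borel_measurable M"
proof -
  have "\<forall>n. \<exists>P. P \<in> borel_partitions \<and> (\<forall>q. \<bar>f q - grid_step f P q\<bar> < 1 / real (Suc n))"
    by (metis grid_step_approx[OF cpt f] of_nat_0_less_iff zero_less_Suc zero_less_divide_1_iff)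
  then obtain P where P: "\<And>n. P n \<in> borel_partitions"
    and approx: "\<And>n q. \<bar>f q - grid_step f (P n) q\<bar> < 1 / real (Suc n)"
    by metis
  show ?thesis
  proof (rule borel_measurable_LIMSEQ_real)
    fix q
    have "(\<lambda>n. grid_step f (P n) q - f q) \<longlonglongrightarrow> 0"
      by (rule LIMSEQ_norm_0) (use approx in \<open>simp add: abs_minus_commute\<close>)
    then show "(\<lambda>n. grid_step f (P n) q) \<longlonglongrightarrow> f q"
      by (rule LIM_zero_cancel)
  next
    fix n
    show "grid_step f (P n) \<in> borel_measurable M"
      using borel_partitionsD(2)[OF P] by (intro borel_measurable_grid_step rect) auto
  qed
qed

lemma abs_integral_grid_step_le:
  fixes f :: "'a::topological_space \<times> 'a \<Rightarrow> real"
  assumes M: "prob_space M" "sets M = sets borel" and cpt: "compact (UNIV :: 'a set)"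
    and f: "continuous_on UNIV f" and P: "P \<in> borel_partitions"
    and approx: "\<And>q. \<bar>f q - grid_step f P q\<bar> \<le> e"
  shows "\<bar>integral\<^sup>L M f - integral\<^sup>L M (grid_step f P)\<bar> \<le> e"
proof -
  interpret prob_space M
    by fact
  have "A \<times> B \<in> sets M" if "A \<in> P" "B \<in> P" for A B
    using that borel_partitionsD(2)[OF P] M(2) by (auto intro: borel_Times)
  then show ?thesis
    using compact_Times[OF cpt cpt] f M(2) approx
    by (intro abs_integral_diff_le integrable_continuous_compact_UNIV integral_grid_step(1)
              borel_measurable_continuous_on_UNIV finite_measure) auto
qed

section \<open>Haar measure on a compact group\<close>

locale compact_haar =
  fixes lam :: "'a::{topological_group_add, t2_space} measure"
  assumes compact_UNIV: "compact (UNIV :: 'a set)"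
    and haar: "haar_prob lam"
begin

sublocale prob_space lam
  using haar by (simp add: haar_prob_def)

lemma sets_lam: "sets lam = sets borel"
  using haar by (simp add: haar_prob_def)

lemma space_lam: "space lam = UNIV"
  using sets_eq_imp_space_eq[OF sets_lam] by simp

lemma measurable_add_left: "(\<lambda>x. c + x) \<in> borel_measurable lam"
  by (intro borel_measurable_continuous_on_UNIV sets_lam continuous_intros)

lemma distr_add_left: "distr lam borel (\<lambda>x. c + x) = lam"
proof (rule measure_eqI)
  fix A assume "A \<in> sets (distr lam borel (\<lambda>x. c + x))"
  then have A: "A \<in> sets borel"
    by simp
  have "emeasure (distr lam borel (\<lambda>x. c + x)) A = emeasure lam ((\<lambda>x. c + x) -` A)"
    using A measurable_add_left by (subst emeasure_distr) (auto simp: space_lam)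
  also have "(\<lambda>x. c + x) -` A = (\<lambda>a. - c + a) ` A"
    by (simp add: image_add_left_eq_vimage)
  also have "emeasure lam \<dots> = emeasure lam A"
    using haar A by (simp add: haar_prob_def)
  finally show "emeasure (distr lam borel (\<lambda>x. c + x)) A = emeasure lam A" .
qed (simp add: sets_lam)

lemma integral_add_left:
  fixes f :: "'a \<Rightarrow> real"
  assumes "f \<in> borel_measurable borel"
  shows "(\<integral>x. f (c + x) \<partial>lam) = integral\<^sup>L lam f"
  using integral_distr[OF measurable_add_left assms] by (simp add: distr_add_left)

text \<open>By Fubini, \<open>\<integral>\<integral> h(-z + x) dx dz\<close> equals both \<open>\<integral> h\<close> and \<open>\<integral> h(-w) dw\<close>.\<close>

lemma integral_uminus:
  fixes h :: "'a \<Rightarrow> real"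
  assumes h: "continuous_on UNIV h"
  shows "(\<integral>x. h (- x) \<partial>lam) = integral\<^sup>L lam h"
proof -
  define f where "f x z = h (- z + x)" for x z
  have f_cont: "continuous_on UNIV (case_prod f)"
    unfolding f_def case_prod_beta
    by (rule continuous_on_compose2[OF h]) (auto intro!: continuous_intros)
  have h_meas: "h \<in> borel_measurable borel" "(\<lambda>w. h (- w)) \<in> borel_measurable borel"
    using h by (auto intro!: borel_measurable_continuous_onI continuous_on_compose2[OF h] continuous_intros)
  interpret lam2: pair_prob_space lam lam ..
  have "case_prod f \<in> borel_measurable (lam \<Otimes>\<^sub>M lam)"
    using compact_UNIV f_cont
    by (rule borel_measurable_continuous_rectangles) (simp add: pair_measureI sets_lam)
  then have "integrable (lam \<Otimes>\<^sub>M lam) (case_prod f)"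
    using compact_Times[OF compact_UNIV compact_UNIV] f_cont
    by (intro integrable_continuous_compact_UNIV lam2.finite_measure) auto
  then have "(\<integral>z. (\<integral>x. f x z \<partial>lam) \<partial>lam) = (\<integral>x. (\<integral>z. f x z \<partial>lam) \<partial>lam)"
    by (rule lam2.Fubini_integral)
  moreover have "(\<integral>x. f x z \<partial>lam) = integral\<^sup>L lam h" for z
    unfolding f_def by (rule integral_add_left[OF h_meas(1)])
  moreover have "(\<integral>z. f x z \<partial>lam) = (\<integral>w. h (- w) \<partial>lam)" for x
    using integral_add_left[OF h_meas(2), of "- x"] by (simp add: f_def minus_add)
  ultimately show ?thesis
    by (simp add: prob_space)
qed

lemma integrable_continuous_lam:
  fixes g :: "'a \<Rightarrow> real"
  assumes "continuous_on UNIV g"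
  shows "integrable lam g"
  using borel_measurable_continuous_on_UNIV[OF assms sets_lam]
  by (rule integrable_continuous_compact_UNIV[OF finite_measure compact_UNIV assms])

lemma emeasure_compact_le_open:
  assumes K: "compact K" and U: "open U" "uminus ` K \<subseteq> U"
  shows "emeasure lam K \<le> emeasure lam U"
proof -
  have "open (uminus -` U)"
    by (rule open_vimage[OF U(1)]) (intro continuous_intros)
  moreover have "K \<subseteq> uminus -` U"
    using U(2) by auto
  ultimately obtain f :: "'a \<Rightarrow> real" where f: "continuous_on UNIV f" "\<And>x. 0 \<le> f x" "\<And>x. f x \<le> 1"
    "\<And>x. x \<in> K \<Longrightarrow> f x = 1" "\<And>x. x \<notin> uminus -` U \<Longrightarrow> f x = 0"
    using compact_Hausdorff_Urysohn[OF compact_UNIV K] by blast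
  have f_uminus: "continuous_on UNIV (\<lambda>x. f (- x))"
    by (rule continuous_on_compose2[OF f(1)]) (auto intro!: continuous_intros)
  have K_U: "K \<in> sets lam" "U \<in> sets lam"
    using K U by (auto simp: sets_lam intro: borel_compact)
  have ind: "integrable lam (indicator S :: 'a \<Rightarrow> real)" if "S \<in> sets lam" for S
    by (intro integrable_real_indicator that) (simp add: less_top[symmetric])
  have "measure lam K = (\<integral>x. indicator K x \<partial>lam)"
    using K_U by simp
  also have "\<dots> \<le> integral\<^sup>L lam f"
    using f(2,4) by (intro integral_mono ind[OF K_U(1)] integrable_continuous_lam[OF f(1)])
                    (auto simp: indicator_def)
  also have "\<dots> = (\<integral>x. f (- x) \<partial>lam)"
    by (rule integral_uminus[OF f(1), symmetric])
  also have "\<dots> \<le> (\<integral>x. indicator U x \<partial>lam)"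
    using f(3,5) by (intro integral_mono ind[OF K_U(2)] integrable_continuous_lam[OF f_uminus])
                    (auto simp: indicator_def)
  also have "\<dots> = measure lam U"
    using K_U by simp
  finally show ?thesis
    by (simp add: emeasure_eq_measure)
qed

lemma emeasure_le_image_uminus:
  assumes E: "E \<in> sets borel"
  shows "emeasure lam E \<le> emeasure lam (uminus ` E)"
proof -
  have "emeasure lam E = (SUP K\<in>{K. compact K \<and> K \<subseteq> E}. emeasure lam K)"
    using haar E unfolding haar_prob_def regular_measure_def by blast
  also have "\<dots> \<le> emeasure lam (uminus ` E)"
  proof (rule SUP_least, clarify)
    fix K assume K: "compact K" "K \<subseteq> E"
    have "emeasure lam (uminus ` K) = (INF U\<in>{U. open U \<and> uminus ` K \<subseteq> U}. emeasure lam U)"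
      using haar sets_borel_image_uminus[OF borel_compact[OF K(1)]]
      unfolding haar_prob_def regular_measure_def by blast
    then have "emeasure lam K \<le> emeasure lam (uminus ` K)"
      using emeasure_compact_le_open[OF K(1)] by (auto intro: INF_greatest)
    also have "\<dots> \<le> emeasure lam (uminus ` E)"
      using K(2) sets_borel_image_uminus[OF E] by (intro emeasure_mono) (auto simp: sets_lam)
    finally show "emeasure lam K \<le> emeasure lam (uminus ` E)" .
  qed
  finally show ?thesis .
qed
lemma emeasure_image_uminus:
  assumes "E \<in> sets borel"
  shows "emeasure lam (uminus ` E) = emeasure lam E"
  using emeasure_le_image_uminus[OF assms] emeasure_le_image_uminus[OF sets_borel_image_uminus[OF assms]]
  by (simp add: image_image)

lemma emeasure_rtrans:
  assumes E: "E \<in> sets borel"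
  shows "emeasure lam (rtrans E y) = emeasure lam E"
proof -
  have E': "uminus ` E \<in> sets borel" "(\<lambda>a. - y + a) ` uminus ` E \<in> sets borel"
    using E by (auto intro: sets_borel_image_uminus sets_borel_image_add_left)
  have "rtrans E y = uminus ` (\<lambda>a. - y + a) ` uminus ` E"
    unfolding rtrans_def image_image by (simp add: minus_add)
  then have "emeasure lam (rtrans E y) = emeasure lam ((\<lambda>a. - y + a) ` uminus ` E)"
    using emeasure_image_uminus[OF E'(2)] by simp
  also have "\<dots> = emeasure lam (uminus ` E)"
    using haar E'(1) by (simp add: haar_prob_def)
  also have "\<dots> = emeasure lam E"
    using emeasure_image_uminus[OF E] .
  finally show ?thesis .
qed

end

section \<open>The measures \<open>\<nu>\<^sub>y\<close> and \<open>\<nu>\<^sub>y\<^sub>,\<^sub>\<E>\<close>\<close>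

lemma sets_nu_part: "sets (nu_part M L2 y P) = sets borel"
  unfolding nu_part_def using sets.sets_measure_of_eq[of borel] by simp

lemma sets_nu_diag: "sets (nu_diag M y) = sets borel"
  unfolding nu_diag_def by simp

lemma space_nu_part: "space (nu_part M L2 y P) = UNIV"
  unfolding nu_part_def by simp

lemma emeasure_nu_part:
  fixes M :: "'a::topological_group_add measure"
  assumes L2: "sets L2 = sets borel" and P: "P \<subseteq> sets borel" and D: "D \<in> sets borel"
  shows "emeasure (nu_part M L2 y P) D =
    (\<Sum>E\<in>{E\<in>P. 0 < emeasure M E}. emeasure L2 (D \<inter> (E \<times> rtrans E y)) / emeasure M E)"
proof -
  let ?\<mu> = "\<lambda>D. \<Sum>E\<in>{E\<in>P. 0 < emeasure M E}. emeasure L2 (D \<inter> (E \<times> rtrans E y)) / emeasure M E"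
  have "countably_additive (sets borel) ?\<mu>"
    unfolding countably_additive_def
  proof (intro allI impI)
    fix A :: "nat \<Rightarrow> ('a \<times> 'a) set"
    assume A: "range A \<subseteq> sets borel" "disjoint_family A" "\<Union> (range A) \<in> sets borel"
    have "(\<Sum>i. emeasure L2 (A i \<inter> C)) = emeasure L2 (\<Union> (range A) \<inter> C)" if "C \<in> sets borel" for C
      using suminf_emeasure[of "\<lambda>i. A i \<inter> C" L2] A that L2
      by (auto simp: disjoint_family_on_def)
    moreover have "E \<times> rtrans E y \<in> sets borel" if "E \<in> P" for E
      using that P by (intro borel_Times sets_borel_rtrans) auto
    ultimately have "(\<Sum>i. emeasure L2 (A i \<inter> (E \<times> rtrans E y)) / emeasure M E) =
        emeasure L2 (\<Union> (range A) \<inter> (E \<times> rtrans E y)) / emeasure M E" if "E \<in> P" for E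
      using that by simp
    moreover have "(\<Sum>i. ?\<mu> (A i)) =
        (\<Sum>E\<in>{E\<in>P. 0 < emeasure M E}. \<Sum>i. emeasure L2 (A i \<inter> (E \<times> rtrans E y)) / emeasure M E)"
      by (rule suminf_sum) simp
    ultimately show "(\<Sum>i. ?\<mu> (A i)) = ?\<mu> (\<Union> (range A))"
      by simp
  qed
  then show ?thesis
    unfolding nu_part_def
    using sets.sigma_algebra_axioms[of "borel :: ('a \<times> 'a) measure"] D
    by (subst emeasure_measure_of_sigma) (auto simp: positive_def)
qed

context compact_haar
begin

lemma prob_space_nu_diag: "prob_space (nu_diag lam y)"
  unfolding nu_diag_def
  by (intro prob_space_distr) (auto intro!: borel_measurable_continuous_on_UNIV continuous_intros
                                   simp: sets_lam)

lemma emeasure_nu_diag_Times: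
  assumes "A \<in> sets borel" "B \<in> sets borel"
  shows "emeasure (nu_diag lam y) (A \<times> B) = emeasure lam (A \<inter> rtrans B (- y))"
proof -
  have "emeasure (nu_diag lam y) (A \<times> B) = emeasure lam ((\<lambda>x. (x, x + y)) -` (A \<times> B) \<inter> space lam)"
    unfolding nu_diag_def using assms
    by (intro emeasure_distr borel_Times)
       (auto intro!: borel_measurable_continuous_on_UNIV continuous_intros simp: sets_lam)
  also have "(\<lambda>x. (x, x + y)) -` (A \<times> B) \<inter> space lam = A \<inter> rtrans B (- y)"
    by (auto simp: rtrans_uminus space_lam)
  finally show ?thesis .
qed

end

locale compact_haar_product = compact_haar +
  fixes lam2 :: "('a \<times> 'a) measure"
  assumes product: "regular_product_extension lam lam2"
begin

lemma sets_lam2: "sets lam2 = sets borel"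
  using product by (simp add: regular_product_extension_def)

lemma emeasure_lam2_Times:
  "A \<in> sets borel \<Longrightarrow> B \<in> sets borel \<Longrightarrow> emeasure lam2 (A \<times> B) = emeasure lam A * emeasure lam B"
  using product by (simp add: regular_product_extension_def)

lemma emeasure_nu_part_block:
  assumes A: "A \<in> sets borel" and B: "B \<in> sets borel" and E: "E \<in> sets borel" "0 < emeasure lam E"
    and resolved: "(E \<subseteq> A \<or> E \<inter> A = {}) \<and> (E \<subseteq> rtrans B (- y) \<or> E \<inter> rtrans B (- y) = {})"
  shows "emeasure lam2 ((A \<times> B) \<inter> (E \<times> rtrans E y)) / emeasure lam E =
    emeasure lam (E \<inter> (A \<inter> rtrans B (- y)))"
proof -
  let ?B' = "rtrans B (- y)"
  have E_B': "E \<inter> ?B' \<in> sets borel"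
    using E(1) sets_borel_rtrans[OF B] by auto
  have "(A \<times> B) \<inter> (E \<times> rtrans E y) = (A \<inter> E) \<times> rtrans (E \<inter> ?B') y"
    by (auto simp: Int_rtrans[symmetric])
  also have "emeasure lam2 \<dots> = emeasure lam (A \<inter> E) * emeasure lam (rtrans (E \<inter> ?B') y)"
    using A E(1) E_B' by (intro emeasure_lam2_Times sets_borel_rtrans) auto
  finally have numerator: "emeasure lam2 ((A \<times> B) \<inter> (E \<times> rtrans E y)) =
      emeasure lam (A \<inter> E) * emeasure lam (E \<inter> ?B')"
    using emeasure_rtrans[OF E_B'] by simp
  from resolved consider "E \<subseteq> A \<inter> ?B'" | "A \<inter> E = {} \<or> E \<inter> ?B' = {}"
    by blast
  then show ?thesis
  proof cases
    case 1
    then have "A \<inter> E = E" "E \<inter> ?B' = E" "E \<inter> (A \<inter> ?B') = E"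
      by auto
    moreover have "emeasure lam E * emeasure lam E / emeasure lam E = emeasure lam E"
      using E(2) by (intro ennreal_mult_divide_eq) (auto simp: emeasure_eq_measure)
    ultimately show ?thesis
      using numerator by simp
  next
    case 2
    then have "E \<inter> (A \<inter> ?B') = {}"
      by auto
    with 2 show ?thesis
      using numerator by auto
  qed
qed

lemma emeasure_nu_part_Times:
  assumes A: "A \<in> sets borel" and B: "B \<in> sets borel" and Q: "Q \<in> borel_partitions"
    and resolved: "\<And>E. E \<in> Q \<Longrightarrow>
      (E \<subseteq> A \<or> E \<inter> A = {}) \<and> (E \<subseteq> rtrans B (- y) \<or> E \<inter> rtrans B (- y) = {})"
  shows "emeasure (nu_part lam lam2 y Q) (A \<times> B) = emeasure (nu_diag lam y) (A \<times> B)"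
proof -
  let ?B' = "rtrans B (- y)"
  have "emeasure (nu_part lam lam2 y Q) (A \<times> B) =
      (\<Sum>E\<in>{E\<in>Q. 0 < emeasure lam E}. emeasure lam2 ((A \<times> B) \<inter> (E \<times> rtrans E y)) / emeasure lam E)"
    using borel_partitionsD(2)[OF Q] A B by (intro emeasure_nu_part sets_lam2 borel_Times)
  also have "\<dots> = (\<Sum>E\<in>{E\<in>Q. 0 < emeasure lam E}. emeasure lam (E \<inter> (A \<inter> ?B')))"
    using borel_partitionsD(2)[OF Q] A B resolved by (intro sum.cong emeasure_nu_part_block) auto
  also have "\<dots> = (\<Sum>E\<in>Q. emeasure lam (E \<inter> (A \<inter> ?B')))"
    using borel_partitionsD(1,2)[OF Q]
    by (intro sum.mono_neutral_left) (auto simp: sets_lam zero_less_iff_neq_zero emeasure_eq_0)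
  also have "\<dots> = emeasure lam (A \<inter> ?B')"
    using A sets_borel_rtrans[OF B] by (intro sum_emeasure_borel_partition[OF Q sets_lam]) (auto simp: sets_lam)
  also have "\<dots> = emeasure (nu_diag lam y) (A \<times> B)"
    using emeasure_nu_diag_Times[OF A B] by simp
  finally show ?thesis .
qed

lemma prob_space_nu_part:
  assumes "Q \<in> borel_partitions"
  shows "prob_space (nu_part lam lam2 y Q)"
proof
  have "emeasure (nu_part lam lam2 y Q) (UNIV \<times> UNIV) = emeasure (nu_diag lam y) (UNIV \<times> UNIV)"
    using assms by (intro emeasure_nu_part_Times) (auto simp: rtrans_uminus)
  also have "\<dots> = 1"
    using prob_space.emeasure_space_1[OF prob_space_nu_diag] by (simp add: nu_diag_def)
  finally show "emeasure (nu_part lam lam2 y Q) (space (nu_part lam lam2 y Q)) = 1"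
    by (simp add: space_nu_part)
qed

lemma eventually_measure_nu_part_Times:
  assumes A: "A \<in> sets borel" and B: "B \<in> sets borel"
  shows "eventually (\<lambda>Q. measure (nu_part lam lam2 y Q) (A \<times> B) = measure (nu_diag lam y) (A \<times> B))
    partition_net"
proof -
  have "atoms {A, rtrans B (- y)} \<in> borel_partitions"
    using A sets_borel_rtrans[OF B] by (intro atoms_in_borel_partitions) auto
  then show ?thesis
  proof (rule eventually_mono[OF eventually_partition_net_refines], clarify)
    fix Q assume Q: "Q \<in> borel_partitions" "refines Q (atoms {A, rtrans B (- y)})"
    have "emeasure (nu_part lam lam2 y Q) (A \<times> B) = emeasure (nu_diag lam y) (A \<times> B)"
      using refines_atoms_subset_or_disjoint[OF Q(2), of A]
        refines_atoms_subset_or_disjoint[OF Q(2), of "rtrans B (- y)"]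
      by (intro emeasure_nu_part_Times[OF A B Q(1)]) simp
    then show "measure (nu_part lam lam2 y Q) (A \<times> B) = measure (nu_diag lam y) (A \<times> B)"
      by (simp add: measure_def)
  qed
qed

lemma eventually_integral_grid_step_nu_part:
  assumes P: "P \<in> borel_partitions"
  shows "eventually (\<lambda>Q. Q \<in> borel_partitions \<and>
    integral\<^sup>L (nu_part lam lam2 y Q) (grid_step f P) = integral\<^sup>L (nu_diag lam y) (grid_step f P))
    partition_net"
proof -
  have rect: "A \<times> B \<in> sets borel" if "A \<in> P" "B \<in> P" for A B
    using that borel_partitionsD(2)[OF P] by (auto intro: borel_Times)
  have "eventually (\<lambda>Q. Q \<in> borel_partitions \<and>
      (\<forall>(A, B)\<in>P \<times> P. measure (nu_part lam lam2 y Q) (A \<times> B) = measure (nu_diag lam y) (A \<times> B)))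
      partition_net"
    using borel_partitionsD(1,2)[OF P] eventually_partition_net_refines[OF P]
    by (auto intro!: eventually_conj eventually_ball_finite eventually_measure_nu_part_Times
             elim: eventually_mono)
  then show ?thesis
  proof (rule eventually_mono, clarify)
    fix Q assume Q: "Q \<in> borel_partitions"
      and same: "\<forall>(A, B)\<in>P \<times> P. measure (nu_part lam lam2 y Q) (A \<times> B) = measure (nu_diag lam y) (A \<times> B)"
    let ?N = "nu_part lam lam2 y Q" and ?D = "nu_diag lam y"
    have fin: "finite_measure ?N" "finite_measure ?D"
      using prob_space_nu_part[OF Q] prob_space_nu_diag by (auto intro: prob_space.finite_measure)
    have "integral\<^sup>L ?N (grid_step f P) = (\<Sum>(A, B)\<in>P \<times> P. f (SOME p. p \<in> A \<times> B) * measure ?N (A \<times> B))"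
      using rect by (intro integral_grid_step(2)[OF fin(1)]) (simp add: sets_nu_part)
    also have "\<dots> = (\<Sum>(A, B)\<in>P \<times> P. f (SOME p. p \<in> A \<times> B) * measure ?D (A \<times> B))"
      using same by (intro sum.cong) auto
    also have "\<dots> = integral\<^sup>L ?D (grid_step f P)"
      using rect by (intro integral_grid_step(2)[OF fin(2), symmetric]) (simp add: sets_nu_diag)
    finally show "integral\<^sup>L ?N (grid_step f P) = integral\<^sup>L ?D (grid_step f P)" .
  qed
qed

lemma tendsto_integral_nu_part:
  fixes f :: "'a \<times> 'a \<Rightarrow> real"
  assumes f: "continuous_on UNIV f"
  shows "((\<lambda>Q. integral\<^sup>L (nu_part lam lam2 y Q) f) \<longlongrightarrow> integral\<^sup>L (nu_diag lam y) f) partition_net"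
proof (rule tendstoI)
  fix e :: real assume "0 < e"
  then obtain P where P: "P \<in> borel_partitions" and approx: "\<And>q. \<bar>f q - grid_step f P q\<bar> < e / 3"
    using grid_step_approx[OF compact_UNIV f, of "e / 3"] by auto
  have close: "\<bar>integral\<^sup>L N f - integral\<^sup>L N (grid_step f P)\<bar> \<le> e / 3"
    if "prob_space N" "sets N = sets borel" for N
    by (rule abs_integral_grid_step_le[OF that compact_UNIV f P]) (rule less_imp_le[OF approx])
  show "eventually (\<lambda>Q. dist (integral\<^sup>L (nu_part lam lam2 y Q) f) (integral\<^sup>L (nu_diag lam y) f) < e)
      partition_net"
    using eventually_integral_grid_step_nu_part[OF P]
  proof (rule eventually_mono, clarify)
    fix Q assume Q: "Q \<in> borel_partitions"
      and same: "integral\<^sup>L (nu_part lam lam2 y Q) (grid_step f P) = integral\<^sup>L (nu_diag lam y) (grid_step f P)"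
    have "\<bar>integral\<^sup>L (nu_part lam lam2 y Q) f - integral\<^sup>L (nu_part lam lam2 y Q) (grid_step f P)\<bar> \<le> e / 3"
      by (rule close[OF prob_space_nu_part[OF Q] sets_nu_part])
    moreover have "\<bar>integral\<^sup>L (nu_diag lam y) f - integral\<^sup>L (nu_diag lam y) (grid_step f P)\<bar> \<le> e / 3"
      by (rule close[OF prob_space_nu_diag sets_nu_diag])
    ultimately show "dist (integral\<^sup>L (nu_part lam lam2 y Q) f) (integral\<^sup>L (nu_diag lam y) f) < e"
      using same \<open>0 < e\<close> unfolding dist_real_def by linarith
  qed
qed

end

theorem lemma3p3:
  fixes lam :: "'a::{topological_group_add, t2_space} measure"
    and lam2 :: "('a \<times> 'a) measure"
    and y :: 'a
  assumes "compact (UNIV :: 'a set)"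
    and "haar_prob lam"
    and "regular_product_extension lam lam2"
  shows "(\<forall>A\<in>sets borel. \<forall>B\<in>sets borel.
            ((\<lambda>P. measure (nu_part lam lam2 y P) (A \<times> B))
               \<longlongrightarrow> measure (nu_diag lam y) (A \<times> B)) partition_net)
       \<and> prob_space (nu_diag lam y)
       \<and> (\<forall>P\<in>borel_partitions. prob_space (nu_part lam lam2 y P))
       \<and> (\<forall>f :: 'a \<times> 'a \<Rightarrow> real. continuous_on UNIV f \<longrightarrow>
            ((\<lambda>P. integral\<^sup>L (nu_part lam lam2 y P) f)
               \<longlongrightarrow> integral\<^sup>L (nu_diag lam y) f) partition_net)"
proof -
  interpret compact_haar_product lam lam2
    using assms by unfold_locales
  show ?thesis
    using tendsto_eventually[OF eventually_measure_nu_part_Times] prob_space_nu_diag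
      prob_space_nu_part tendsto_integral_nu_part
    by blast
qed

end
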